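(* Let $1\le k\le n-k$, $\mathfrak{g}=\mathfrak{sl}_n(\mathbb{C})$, and let $I=\{i_1<\cdots<i_k\}$, $J=\{j_1<\cdots<j_k\}$ be distinct subsets of $\{1,\dots,n\}$ with $r=|I\cap J|$. Suppose there is a dominant integral weight $\nu$ such that $\nu+\lambda_I$ and $\nu+\lambda_J$ are both dominant integral and $f_{\mathfrak{C}_p,I}(\nu)=f_{\mathfrak{C}_p,J}(\nu)$ for $2\le p\le k$. Then $r=0$.
   Context: $X_{ij}=E_{ij}$ ($i\ne j$), $X_{ii}=E_{ii}-\frac1n\sum_lE_{ll}$; $\mathfrak{C}_p=\sum_{i_1,\dots,i_p=1}^nX_{i_1i_2}\cdots X_{i_pi_1}\in Z(\mathfrak{g})$. $\omega_1,\dots,\omega_{n-1}$ are the fundamental weights, $\omega_0=\omega_n=0$, and $\lambda_I=\sum_{t=1}^k(\omega_{i_t}-\omega_{i_t-1})$. For a weight $\mu$, $\chi_\mu$ is the infinitesimal central character of the irreducible highest weight module $V_\mu$, and $f_{\mathfrak{C}_p,I}(\nu)=\chi_{\nu+\lambda_I}(\mathfrak{C}_p)-\chi_\nu(\mathfrak{C}_p)-\chi_{\omega_k}(\mathfrak{C}_p)$. *)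

theory Defs
  imports Complex_Main
begin

text \<open>
  Letters (i,j) with 1 <= i,j <= n stand for the matrix units E_ij of gl_n.
  A word w = [x_1,...,x_m] stands for the product x_1 x_2 ... x_m in U(gl_n).
  Given a gl_n weight h (h i = eigenvalue of E_ii on the highest weight vector v),
  vcoef h w is the coefficient of v in w.v inside the Verma module M(h), computed
  by moving raising letters (i<j) to the right via E_ab E_cd = E_cd E_ab + [E_ab,E_cd],
  [E_ab,E_cd] = delta_bc E_ad - delta_da E_cb.

  vc_aux h u t: u is the reversed prefix, t is a suffix free of raising letters;
  the value is the coefficient of v in (rev u @ t).v.
\<close>

definition raising :: "nat \<times> nat \<Rightarrow> bool" where
  "raising x \<longleftrightarrow> fst x < snd x"

fun Mpot :: "(nat \<times> nat) list \<Rightarrow> nat" where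
  "Mpot [] = 0"
| "Mpot (a # w) = (if raising a then length w else 0) + Mpot w"

fun Rcnt :: "(nat \<times> nat) list \<Rightarrow> nat" where
  "Rcnt [] = 0"
| "Rcnt (a # w) = (if raising a then 1 else 0) + Rcnt w"

lemma Rcnt_append: "Rcnt (A @ B) = Rcnt A + Rcnt B"
  by (induction A) auto

lemma Mpot_append: "Mpot (A @ B) = Mpot A + Rcnt A * length B + Mpot B"
  by (induction A) (auto simp: algebra_simps)

function vc_aux :: "(nat \<Rightarrow> complex) \<Rightarrow> (nat \<times> nat) list \<Rightarrow> (nat \<times> nat) list \<Rightarrow> complex" where
  "vc_aux h [] t =
     (if (\<forall>x \<in> set t. fst x = snd x) then (\<Prod>x\<leftarrow>t. h (fst x)) else 0)"
| "vc_aux h (x # u) t =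
     (if \<not> raising x then vc_aux h u (x # t)
      else (case t of
              [] \<Rightarrow> 0
            | y # t' \<Rightarrow>
                (if raising y then 0
                 else vc_aux h (x # y # u) t'
                      + (if snd x = fst y then vc_aux h ((fst x, snd y) # u) t' else 0)
                      - (if snd y = fst x then vc_aux h ((fst y, snd x) # u) t' else 0))))"
  by pat_completeness auto
termination
  by (relation "measures [\<lambda>(h,u,t). length u + length t,
                          \<lambda>(h,u,t). Mpot (rev u @ t),
                          \<lambda>(h,u,t). length u]")
     (auto simp: Mpot_append Rcnt_append algebra_simps)

definition vcoef :: "(nat \<Rightarrow> complex) \<Rightarrow> (nat \<times> nat) list \<Rightarrow> complex" where
  "vcoef h w = vc_aux h (rev w) []"

text \<open>X_ij = E_ij (i /= j), X_ii = E_ii - (1/n) sum_l E_ll, as linear combinations of letters.\<close>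
definition Xexp :: "nat \<Rightarrow> nat \<times> nat \<Rightarrow> ((nat \<times> nat) \<times> complex) list" where
  "Xexp n x = (if fst x \<noteq> snd x then [(x, 1)]
               else (x, 1) # map (\<lambda>l. ((l, l), - 1 / of_nat n)) [1..<n+1])"

text \<open>Coefficient of v in X_{x_1} ... X_{x_m} . v (multilinear expansion).\<close>
definition vcoefX :: "nat \<Rightarrow> (nat \<Rightarrow> complex) \<Rightarrow> (nat \<times> nat) list \<Rightarrow> complex" where
  "vcoefX n h xs = sum_list (map (\<lambda>c. prod_list (map snd c) * vcoef h (map fst c))
                                 (product_lists (map (Xexp n) xs)))"

definition cycword :: "nat list \<Rightarrow> (nat \<times> nat) list" where
  "cycword is = map (\<lambda>q. (is ! q, is ! ((q + 1) mod length is))) [0..<length is]"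

text \<open>
  sl_n weights are given by Dynkin labels: mu i is the coefficient of omega_i (1 <= i <= n-1).
  The fundamental weight omega_i corresponds to the gl_n weight (1,...,1,0,...,0) (i ones);
  any gl_n lift gives the same action of the X_ij.
\<close>
definition gl_lift :: "nat \<Rightarrow> (nat \<Rightarrow> int) \<Rightarrow> nat \<Rightarrow> complex" where
  "gl_lift n mu j = of_int (\<Sum>i\<in>{j..n-1}. mu i)"

text \<open>chi_mu(C_p): scalar by which C_p = sum X_{i1 i2} ... X_{ip i1} acts on V_mu.\<close>
definition chi :: "nat \<Rightarrow> (nat \<Rightarrow> int) \<Rightarrow> nat \<Rightarrow> complex" where
  "chi n mu p = sum_list (map (\<lambda>is. vcoefX n (gl_lift n mu) (cycword is))
                               (List.n_lists p [1..<n+1]))"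

definition omega :: "nat \<Rightarrow> nat \<Rightarrow> nat \<Rightarrow> int" where
  "omega n i = (\<lambda>j. if 1 \<le> i \<and> i \<le> n - 1 \<and> j = i then 1 else 0)"

definition wadd :: "(nat \<Rightarrow> int) \<Rightarrow> (nat \<Rightarrow> int) \<Rightarrow> nat \<Rightarrow> int" where
  "wadd a b = (\<lambda>j. a j + b j)"

definition lambdaI :: "nat \<Rightarrow> nat set \<Rightarrow> nat \<Rightarrow> int" where
  "lambdaI n I = (\<lambda>j. \<Sum>i\<in>I. omega n i j - omega n (i - 1) j)"

definition dominant_integral :: "nat \<Rightarrow> (nat \<Rightarrow> int) \<Rightarrow> bool" where
  "dominant_integral n mu \<longleftrightarrow> (\<forall>i \<in> {1..n-1}. 0 \<le> mu i)"

definition fC :: "nat \<Rightarrow> nat \<Rightarrow> nat \<Rightarrow> nat set \<Rightarrow> (nat \<Rightarrow> int) \<Rightarrow> complex" where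
  "fC n k p I nu = chi n (wadd nu (lambdaI n I)) p - chi n nu p - chi n (omega n k) p"

end

(*
  chi_mu(C_p) is read off the Verma module: commuting the raising letters of the cyclic words
  to the right shows that the diagonal path sums c_m(i) satisfy
  c_(m+1)(i) = d_i c_m(i) - sum_(l > i) c_m(l), where d is the traceless weight shifted by rho.
  With F_i(X) = sum_m c_m(i) X^m this gives
  1 - X sum_i F_i(X) = prod_i (1 - (d_i + 1) X) / (1 - d_i X),
  so chi(C_1), ..., chi(C_k) determine the sums sum_i d_i^m - (d_i + 1)^m for m <= k + 1.
  For nu + lambda_I one has d_i = a_i + [i in I] with a independent of I; hence the hypothesis
  gives equal sums over I and over J of second differences of powers of a, and by triangularity
  equal power sums of a over I and J in degrees below k. If I and J meet, I - J and J - I have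
  fewer than k elements, so by Newton's identities a takes the same values on them; but a is
  injective because nu is dominant, which forces I = J.
*)
theory Submission
  imports Defs "HOL-Computational_Algebra.Polynomial_FPS"
begin

section \<open>Verma module coefficients\<close>

definition no_raising :: "(nat \<times> nat) list \<Rightarrow> bool" where
  "no_raising t \<longleftrightarrow> (\<forall>x\<in>set t. \<not> raising x)"

text \<open>With g extended linearly from letters to matrix units, bracket g x y is g evaluated at
  the commutator [E_x, E_y].\<close>
definition bracket :: "(nat \<times> nat \<Rightarrow> 'a::ab_group_add) \<Rightarrow> nat \<times> nat \<Rightarrow> nat \<times> nat \<Rightarrow> 'a" where
  "bracket g x y = (if snd x = fst y then g (fst x, snd y) else 0)
                 - (if snd y = fst x then g (fst y, snd x) else 0)"

lemma bracket_zero [simp]: "bracket (\<lambda>m. 0) x y = 0"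
  by (simp add: bracket_def)

lemma bracket_add: "bracket (\<lambda>m. f m + g m) x y = bracket f x y + bracket g x y"
  by (simp add: bracket_def)

lemma bracket_mult_left: "bracket (\<lambda>m. c * f m) x y = (c::'a::ring) * bracket f x y"
  by (simp add: bracket_def algebra_simps)

lemma bracket_antisym: "bracket g y x = - bracket g x y"
  by (simp add: bracket_def)

lemma bracket_bracket_commute:
  "bracket (\<lambda>m. bracket (\<lambda>m'. F m m') r b) x y = bracket (\<lambda>m'. bracket (\<lambda>m. F m m') x y) r b"
  by (simp add: bracket_def)

lemma bracket_cong_non_raising:
  assumes "\<not> raising x" "\<not> raising y" "\<And>m. \<not> raising m \<Longrightarrow> g m = g' m"
  shows "bracket g x y = bracket g' x y"
  using assms by (auto simp: bracket_def raising_def)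

lemma bracket_raising_raising:
  assumes "raising x" "raising y" "\<And>m. raising m \<Longrightarrow> g m = 0"
  shows "bracket g x y = 0"
  using assms by (auto simp: bracket_def raising_def)

text \<open>The Jacobi identity, in the two forms saying that [-, b] and [z, -] are derivations.\<close>
lemma bracket_derivation_right:
  "bracket (\<lambda>m. bracket G m b) x y = bracket (\<lambda>m. bracket G m y) x b + bracket (\<lambda>m. bracket G x m) y b"
  by (auto simp: bracket_def)

lemma bracket_derivation_left:
  "bracket (\<lambda>m. bracket G z m) x y = bracket (\<lambda>m. bracket G m y) z x + bracket (\<lambda>m. bracket G x m) z y"
  by (auto simp: bracket_def)

lemma vc_aux_append_no_raising: "no_raising t \<Longrightarrow> vc_aux h (t @ u) s = vc_aux h u (rev t @ s)"
  by (induction t arbitrary: s) (auto simp: no_raising_def)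

lemma vc_aux_eq_vcoef: "no_raising t \<Longrightarrow> vc_aux h u t = vcoef h (rev u @ t)"
  using vc_aux_append_no_raising[of "rev t" h u "[]"] by (simp add: vcoef_def no_raising_def)

lemma vcoef_Nil [simp]: "vcoef h [] = 1"
  by (simp add: vcoef_def)

lemma vcoef_no_raising:
  "no_raising t \<Longrightarrow> vcoef h t = (if \<forall>x\<in>set t. fst x = snd x then \<Prod>x\<leftarrow>t. h (fst x) else 0)"
  using vc_aux_eq_vcoef[of t h "[]"] by simp

lemma vcoef_snoc_raising: "raising r \<Longrightarrow> vcoef h (w @ [r]) = 0"
  by (simp add: vcoef_def)

lemma vcoef_swap_raising:
  assumes "raising r" "\<not> raising y" "no_raising t"
  shows "vcoef h (w @ r # y # t) = vcoef h (w @ y # r # t) + bracket (\<lambda>m. vcoef h (w @ m # t)) r y"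
proof -
  have "no_raising (y # t)" using assms by (simp add: no_raising_def)
  then have "vcoef h (w @ r # y # t) = vc_aux h (r # rev w) (y # t)"
    using vc_aux_eq_vcoef[of "y # t" h "r # rev w"] by simp
  also have "\<dots> = vc_aux h (r # y # rev w) t
      + (if snd r = fst y then vc_aux h ((fst r, snd y) # rev w) t else 0)
      - (if snd y = fst r then vc_aux h ((fst y, snd r) # rev w) t else 0)"
    using assms by simp
  also have "\<dots> = vcoef h (w @ y # r # t) + bracket (\<lambda>m. vcoef h (w @ m # t)) r y"
    using vc_aux_eq_vcoef[OF assms(3)] by (simp add: bracket_def)
  finally show ?thesis .
qed

lemma split_last_raising:
  "\<not> no_raising w \<Longrightarrow> \<exists>u r t. w = u @ r # t \<and> raising r \<and> no_raising t"
proof (induction w rule: rev_induct)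
  case (snoc x xs)
  show ?case
  proof (cases "raising x")
    case True
    then show ?thesis by (intro exI[of _ xs] exI[of _ x] exI[of _ "[]"]) (simp add: no_raising_def)
  next
    case False
    then obtain u r t where "xs = u @ r # t" "raising r" "no_raising t"
      using snoc by (auto simp: no_raising_def)
    with False show ?thesis
      by (intro exI[of _ u] exI[of _ r] exI[of _ "t @ [x]"]) (simp add: no_raising_def)
  qed
qed (simp add: no_raising_def)

lemma Mpot_swap_less:
  "raising r \<Longrightarrow> \<not> raising b \<Longrightarrow> Mpot (w @ b # r # t) < Mpot (w @ r # b # t)"
  by (simp add: Mpot_append)

definition vcoef_commutes ::
    "(nat \<Rightarrow> complex) \<Rightarrow> (nat \<times> nat) list \<Rightarrow> nat \<times> nat \<Rightarrow> nat \<times> nat \<Rightarrow> (nat \<times> nat) list \<Rightarrow> bool" where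
  "vcoef_commutes h A x y B \<longleftrightarrow>
     vcoef h (A @ x # y # B) = vcoef h (A @ y # x # B) + bracket (\<lambda>m. vcoef h (A @ m # B)) x y"

lemma vcoef_commutes_raising_in_suffix:
  assumes IH: "\<And>A' x' y' B'. (A' @ x' # y' # B', A @ x # y # B) \<in> measures [length, Mpot] \<Longrightarrow>
                 vcoef_commutes h A' x' y' B'"
    and "\<not> no_raising B"
  shows "vcoef_commutes h A x y B"
proof -
  note IH' = IH[unfolded vcoef_commutes_def]
  let ?F = "vcoef h"
  obtain B0 r t where B: "B = B0 @ r # t" and r: "raising r" and t: "no_raising t"
    using split_last_raising assms(2) by blast
  show ?thesis
  proof (cases t)
    case Nil
    have "?F (w @ B0 @ [r]) = 0" for w using vcoef_snoc_raising[OF r, of h "w @ B0"] by simp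
    from this[of "A @ [x, y]"] this[of "A @ [y, x]"] this[of "A @ [_]"] show ?thesis
      by (simp add: vcoef_commutes_def B Nil bracket_def)
  next
    case (Cons b t')
    have b: "\<not> raising b" "no_raising t'" using t Cons by (auto simp: no_raising_def)
    have move_r: "?F (w @ B0 @ r # b # t') = ?F (w @ B0 @ b # r # t') + bracket (\<lambda>m. ?F (w @ B0 @ m # t')) r b"
      for w using vcoef_swap_raising[OF r b, of h "w @ B0"] by simp
    have xy_moved: "?F (A @ x # y # B0 @ b # r # t') = ?F (A @ y # x # B0 @ b # r # t')
        + bracket (\<lambda>m. ?F (A @ m # B0 @ b # r # t')) x y"
      by (rule IH') (use Mpot_swap_less[OF r b(1), of "A @ x # y # B0" t'] in \<open>simp add: B Cons\<close>)
    have xy_shorter: "?F (A @ x # y # B0 @ m' # t') = ?F (A @ y # x # B0 @ m' # t')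
        + bracket (\<lambda>m. ?F (A @ m # B0 @ m' # t')) x y" for m'
      by (rule IH') (simp add: B Cons)
    have "?F (A @ x # y # B) = ?F (A @ x # y # B0 @ b # r # t')
        + bracket (\<lambda>m'. ?F (A @ x # y # B0 @ m' # t')) r b"
      using move_r[of "A @ [x, y]"] by (simp add: B Cons)
    also have "\<dots> = ?F (A @ y # x # B0 @ b # r # t') + bracket (\<lambda>m. ?F (A @ m # B0 @ b # r # t')) x y
        + bracket (\<lambda>m'. ?F (A @ y # x # B0 @ m' # t')) r b
        + bracket (\<lambda>m'. bracket (\<lambda>m. ?F (A @ m # B0 @ m' # t')) x y) r b"
      unfolding xy_moved xy_shorter bracket_add by simp
    also have "\<dots> = ?F (A @ y # x # B) + bracket (\<lambda>m. ?F (A @ m # B)) x y"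
      using move_r[of "A @ [y, x]"] move_r[of "A @ [_]"]
      by (simp add: B Cons bracket_add bracket_bracket_commute[of _ r b x y])
    finally show ?thesis unfolding vcoef_commutes_def .
  qed
qed

lemma vcoef_commutes_raising_pair:
  assumes IH: "\<And>A' x' y' B'. (A' @ x' # y' # B', A @ x # y # B) \<in> measures [length, Mpot] \<Longrightarrow>
                 vcoef_commutes h A' x' y' B'"
    and B: "no_raising B" and x: "raising x" and y: "raising y"
  shows "vcoef_commutes h A x y B"
proof (cases B)
  case Nil
  have "bracket (\<lambda>m. vcoef h (A @ [m])) x y = 0"
    by (rule bracket_raising_raising[OF x y]) (simp add: vcoef_snoc_raising)
  then show ?thesis
    using vcoef_snoc_raising[OF y, of h "A @ [x]"] vcoef_snoc_raising[OF x, of h "A @ [y]"]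
    by (simp add: vcoef_commutes_def Nil)
next
  case (Cons b B')
  note IH' = IH[unfolded vcoef_commutes_def]
  let ?F = "vcoef h"
  let ?G = "\<lambda>m'. ?F (A @ m' # B')"
  have b: "\<not> raising b" "no_raising B'" using B Cons by (auto simp: no_raising_def)
  \<comment> \<open>Move b to the front of x and y in both orders; the brackets that appear cancel by Jacobi.\<close>
  have e1: "?F (A @ x # y # b # B') = ?F (A @ x # b # y # B') + bracket (\<lambda>m. ?F (A @ x # m # B')) y b"
    using vcoef_swap_raising[OF y b, of h "A @ [x]"] by simp
  have e2: "?F (A @ x # b # y # B') = ?F (A @ b # x # y # B') + bracket (\<lambda>m. ?F (A @ m # y # B')) x b"
    by (rule IH') (use x y b in \<open>simp add: Cons Mpot_append\<close>)
  have e3: "?F (A @ b # x # y # B') = ?F (A @ b # y # x # B') + bracket (\<lambda>m. ?F (A @ b # m # B')) x y"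
    using IH'[of "A @ [b]" x y B'] x y b by (simp add: Cons Mpot_append)
  have e4: "?F (A @ y # x # b # B') = ?F (A @ y # b # x # B') + bracket (\<lambda>m. ?F (A @ y # m # B')) x b"
    using vcoef_swap_raising[OF x b, of h "A @ [y]"] by simp
  have e5: "?F (A @ y # b # x # B') = ?F (A @ b # y # x # B') + bracket (\<lambda>m. ?F (A @ m # x # B')) y b"
    by (rule IH') (use x y b in \<open>simp add: Cons Mpot_append\<close>)
  have e6: "?F (A @ m # b # B') = ?F (A @ b # m # B') + bracket ?G m b" for m
    by (rule IH') (simp add: Cons)
  have e7: "?F (A @ m # y # B') = ?F (A @ y # m # B') + bracket ?G m y" for m
    by (rule IH') (simp add: Cons)
  have e8: "?F (A @ x # m # B') = ?F (A @ m # x # B') + bracket ?G x m" for m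
    by (rule IH') (simp add: Cons)
  show ?thesis
    unfolding vcoef_commutes_def Cons e1 e2 e3 e4 e5 e6 e7 e8 bracket_add
    using bracket_derivation_right[of ?G b x y] by simp
qed

lemma vcoef_commutes_no_raising:
  assumes "no_raising A" "no_raising B" "\<not> raising x" "\<not> raising y"
  shows "vcoef_commutes h A x y B"
proof -
  have nr: "no_raising (A @ x # y # B)" "no_raising (A @ y # x # B)"
    using assms by (auto simp: no_raising_def)
  have nr_m: "no_raising (A @ m # B)" if "\<not> raising m" for m
    using assms that by (auto simp: no_raising_def)
  show ?thesis
  proof (cases "fst x = snd x \<and> fst y = snd y")
    case True
    then show ?thesis
      using vcoef_no_raising[OF nr(1)] vcoef_no_raising[OF nr(2)]
      by (auto simp: vcoef_commutes_def bracket_def ac_simps)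
  next
    case False
    have "bracket (\<lambda>m. vcoef h (A @ m # B)) x y = 0"
      using False assms by (auto simp: bracket_def raising_def vcoef_no_raising[OF nr_m])
    with False show ?thesis
      using vcoef_no_raising[OF nr(1), of h] vcoef_no_raising[OF nr(2), of h]
      by (auto simp: vcoef_commutes_def)
  qed
qed

lemma vcoef_commutes_raising_in_prefix:
  assumes IH: "\<And>A' x' y' B'. (A' @ x' # y' # B', A1 @ z # a # A2 @ x # y # B) \<in> measures [length, Mpot] \<Longrightarrow>
                 vcoef_commutes h A' x' y' B'"
    and z: "raising z" and a: "\<not> raising a" "no_raising A2"
    and B: "no_raising B" and x: "\<not> raising x" and y: "\<not> raising y"
  shows "vcoef_commutes h (A1 @ z # a # A2) x y B"
proof -
  note IH' = IH[unfolded vcoef_commutes_def]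
  let ?F = "vcoef h"
  have move_z: "?F (A1 @ z # a # A2 @ S)
      = ?F (A1 @ a # z # A2 @ S) + bracket (\<lambda>m. ?F (A1 @ m # A2 @ S)) z a"
    if "no_raising S" for S
    using vcoef_swap_raising[OF z a(1), of "A2 @ S" h A1] a(2) that by (auto simp: no_raising_def)
  have xy_moved: "?F (A1 @ a # z # A2 @ x # y # B) = ?F (A1 @ a # z # A2 @ y # x # B)
      + bracket (\<lambda>m. ?F (A1 @ a # z # A2 @ m # B)) x y"
    using IH'[of "A1 @ a # z # A2" x y B] Mpot_swap_less[OF z a(1), of A1 "A2 @ x # y # B"] by simp
  have xy_shorter: "?F (A1 @ m' # A2 @ x # y # B) = ?F (A1 @ m' # A2 @ y # x # B)
      + bracket (\<lambda>m. ?F (A1 @ m' # A2 @ m # B)) x y" for m'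
    using IH'[of "A1 @ m' # A2" x y B] by simp
  have xyB: "no_raising (x # y # B)" "no_raising (y # x # B)" using x y B by (auto simp: no_raising_def)
  have "bracket (\<lambda>m. ?F (A1 @ z # a # A2 @ m # B)) x y
      = bracket (\<lambda>m. ?F (A1 @ a # z # A2 @ m # B) + bracket (\<lambda>m'. ?F (A1 @ m' # A2 @ m # B)) z a) x y"
    by (rule bracket_cong_non_raising[OF x y]) (use move_z B in \<open>auto simp: no_raising_def\<close>)
  then show ?thesis
    unfolding vcoef_commutes_def using move_z[OF xyB(1)] move_z[OF xyB(2)]
    by (simp add: xy_moved xy_shorter bracket_add bracket_bracket_commute[of _ z a x y])
qed

lemma vcoef_commutes_raising_before:
  assumes IH: "\<And>A' x' y' B'. (A' @ x' # y' # B', A @ z # x # y # B) \<in> measures [length, Mpot] \<Longrightarrow>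
                 vcoef_commutes h A' x' y' B'"
    and z: "raising z" and B: "no_raising B" and x: "\<not> raising x" and y: "\<not> raising y"
  shows "vcoef_commutes h (A @ [z]) x y B"
proof -
  note IH' = IH[unfolded vcoef_commutes_def]
  let ?F = "vcoef h"
  let ?G = "\<lambda>m'. ?F (A @ m' # B)"
  have yB: "no_raising (y # B)" "no_raising (x # B)" using x y B by (auto simp: no_raising_def)
  \<comment> \<open>Move z to the back of x and y in both orders; the brackets that appear cancel by Jacobi.\<close>
  have f1: "?F (A @ z # x # y # B) = ?F (A @ x # z # y # B) + bracket (\<lambda>m. ?F (A @ m # y # B)) z x"
    using vcoef_swap_raising[OF z x yB(1), of h A] .
  have f2: "?F (A @ x # z # y # B) = ?F (A @ x # y # z # B) + bracket (\<lambda>m. ?F (A @ x # m # B)) z y"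
    using vcoef_swap_raising[OF z y B, of h "A @ [x]"] by simp
  have f3: "?F (A @ x # y # z # B) = ?F (A @ y # x # z # B) + bracket (\<lambda>m. ?F (A @ m # z # B)) x y"
    by (rule IH') (use z x y in \<open>simp add: Mpot_append\<close>)
  have f4: "?F (A @ z # y # x # B) = ?F (A @ y # z # x # B) + bracket (\<lambda>m. ?F (A @ m # x # B)) z y"
    using vcoef_swap_raising[OF z y yB(2), of h A] .
  have f5: "?F (A @ y # z # x # B) = ?F (A @ y # x # z # B) + bracket (\<lambda>m. ?F (A @ y # m # B)) z x"
    using vcoef_swap_raising[OF z x B, of h "A @ [y]"] by simp
  have f6: "bracket (\<lambda>m. ?F (A @ z # m # B)) x y = bracket (\<lambda>m. ?F (A @ m # z # B) + bracket ?G z m) x y"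
    by (rule bracket_cong_non_raising[OF x y]) (use vcoef_swap_raising[OF z _ B, of _ h A] in auto)
  have f7: "?F (A @ m # y # B) = ?F (A @ y # m # B) + bracket ?G m y" for m
    by (rule IH') simp
  have f8: "?F (A @ x # m # B) = ?F (A @ m # x # B) + bracket ?G x m" for m
    by (rule IH') simp
  show ?thesis
    unfolding vcoef_commutes_def append_assoc append_Cons append_Nil f1 f2 f3 f4 f5 f6 f7 f8 bracket_add
    using bracket_derivation_left[of ?G z x y] by (simp add: algebra_simps)
qed

lemma vcoef_commutes_non_raising_pair:
  assumes IH: "\<And>A' x' y' B'. (A' @ x' # y' # B', A @ x # y # B) \<in> measures [length, Mpot] \<Longrightarrow>
                 vcoef_commutes h A' x' y' B'"
    and B: "no_raising B" and x: "\<not> raising x" and y: "\<not> raising y"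
  shows "vcoef_commutes h A x y B"
proof (cases "no_raising A")
  case False
  then obtain A1 z A2 where A: "A = A1 @ z # A2" and z: "raising z" and A2: "no_raising A2"
    using split_last_raising by blast
  show ?thesis
  proof (cases A2)
    case Nil
    then show ?thesis using vcoef_commutes_raising_before[of A1 z x y B h] IH z B x y A by simp
  next
    case (Cons a A2')
    with A2 show ?thesis
      using vcoef_commutes_raising_in_prefix[of A1 z a A2' x y B h] IH z B x y A
      by (simp add: no_raising_def)
  qed
qed (use assms vcoef_commutes_no_raising in auto)

text \<open>Induction on the length of the word and then on Mpot, which decreases when a raising letter
  moves to the right past a non-raising one.\<close>
theorem vcoef_commute:
  "vcoef h (A @ x # y # B) = vcoef h (A @ y # x # B) + bracket (\<lambda>m. vcoef h (A @ m # B)) x y"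
proof -
  have "\<forall>A x y B. w = A @ x # y # B \<longrightarrow> vcoef_commutes h A x y B" for w
  proof (induction w rule: wf_induct[OF wf_measures[of "[length, Mpot]"]])
    case (1 w)
    show ?case
    proof (intro allI impI)
      fix A x y B assume w: "w = A @ x # y # B"
      have IH: "vcoef_commutes h A' x' y' B'"
        if "(A' @ x' # y' # B', A @ x # y # B) \<in> measures [length, Mpot]" for A' x' y' B'
        using 1 that w by blast
      consider "\<not> no_raising B"
        | "no_raising B" "raising x" "\<not> raising y"
        | "no_raising B" "raising x" "raising y"
        | "no_raising B" "\<not> raising x" "raising y"
        | "no_raising B" "\<not> raising x" "\<not> raising y" by blast
      then show "vcoef_commutes h A x y B"
      proof cases
        case 1
        then show ?thesis using vcoef_commutes_raising_in_suffix[of A x y B h] IH by blast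
      next
        case 2
        then show ?thesis by (simp add: vcoef_commutes_def vcoef_swap_raising)
      next
        case 3
        then show ?thesis using vcoef_commutes_raising_pair[of A x y B h] IH by blast
      next
        case 4
        then show ?thesis
          using vcoef_swap_raising[of y x B h A] bracket_antisym[of "\<lambda>m. vcoef h (A @ m # B)" y x]
          by (simp add: vcoef_commutes_def)
      next
        case 5
        then show ?thesis using vcoef_commutes_non_raising_pair[of A x y B h] IH by blast
      qed
    qed
  qed
  then show ?thesis unfolding vcoef_commutes_def by blast
qed

lemma vcoef_Cons_lowering: "snd x < fst x \<Longrightarrow> vcoef h (x # w) = 0"
proof (induction w rule: wf_induct[OF wf_measures[of "[length, Mpot]"]])
  case (1 w)
  show ?case
  proof (cases "no_raising w")
    case True
    with 1(2) have "no_raising (x # w)" by (simp add: no_raising_def raising_def)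
    with 1(2) show ?thesis by (force simp: vcoef_no_raising)
  next
    case False
    then obtain u r t where w: "w = u @ r # t" and r: "raising r" and t: "no_raising t"
      using split_last_raising by blast
    show ?thesis
    proof (cases t)
      case Nil
      then show ?thesis using vcoef_snoc_raising[OF r, of h "x # u"] w by simp
    next
      case (Cons b t')
      have b: "\<not> raising b" "no_raising t'" using t Cons by (auto simp: no_raising_def)
      have "vcoef h (x # w) = vcoef h (x # u @ b # r # t') + bracket (\<lambda>m. vcoef h (x # u @ m # t')) r b"
        using vcoef_swap_raising[OF r b, of h "x # u"] w Cons by simp
      also have "vcoef h (x # u @ b # r # t') = 0"
        using 1 Mpot_swap_less[OF r b(1), of u t'] by (simp add: w Cons)
      also have "(\<lambda>m. vcoef h (x # u @ m # t')) = (\<lambda>m. 0)"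
        using 1 by (auto simp: w Cons)
      finally show ?thesis by simp
    qed
  qed
qed

lemma vcoef_snoc_diag: "vcoef h (w @ [(a, a)]) = h a * vcoef h w"
proof (induction w rule: wf_induct[OF wf_measures[of "[length, Mpot]"]])
  case (1 w)
  have aa: "\<not> raising (a, a)" by (simp add: raising_def)
  show ?case
  proof (cases "no_raising w")
    case True
    then have "no_raising (w @ [(a, a)])" by (simp add: no_raising_def raising_def)
    then show ?thesis using vcoef_no_raising[OF True, of h] by (auto simp: vcoef_no_raising ac_simps)
  next
    case False
    then obtain u r t where w: "w = u @ r # t" and r: "raising r" and t: "no_raising t"
      using split_last_raising by blast
    show ?thesis
    proof (cases t)
      case Nil
      have "vcoef h (w @ [(a, a)]) = vcoef h (u @ [(a, a), r]) + bracket (\<lambda>m. vcoef h (u @ [m])) r (a, a)"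
        using vcoef_swap_raising[OF r aa, of "[]" h u] w Nil by (simp add: no_raising_def)
      also have "bracket (\<lambda>m. vcoef h (u @ [m])) r (a, a) = 0"
        using r by (auto simp: bracket_def vcoef_snoc_raising raising_def)
      finally show ?thesis
        using vcoef_snoc_raising[OF r, of h u] vcoef_snoc_raising[OF r, of h "u @ [(a, a)]"] w Nil by simp
    next
      case (Cons b t')
      have b: "\<not> raising b" "no_raising t'" using t Cons by (auto simp: no_raising_def)
      have b2: "no_raising (t' @ [(a, a)])" using b(2) aa by (simp add: no_raising_def)
      have "vcoef h (w @ [(a, a)]) = vcoef h (u @ b # r # t' @ [(a, a)])
          + bracket (\<lambda>m. vcoef h (u @ m # t' @ [(a, a)])) r b"
        using vcoef_swap_raising[OF r b(1) b2, of h u] w Cons by simp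
      also have "vcoef h (u @ b # r # t' @ [(a, a)]) = h a * vcoef h (u @ b # r # t')"
        using 1[rule_format, of "u @ b # r # t'"] Mpot_swap_less[OF r b(1), of u t'] by (simp add: w Cons)
      also have "(\<lambda>m. vcoef h (u @ m # t' @ [(a, a)])) = (\<lambda>m. h a * vcoef h (u @ m # t'))"
        by (rule ext) (use 1[rule_format, of "u @ _ # t'"] in \<open>simp add: w Cons\<close>)
      also have "h a * vcoef h (u @ b # r # t') + bracket (\<lambda>m. h a * vcoef h (u @ m # t')) r b
          = h a * vcoef h w"
        using vcoef_swap_raising[OF r b, of h u] w Cons by (simp add: bracket_mult_left algebra_simps)
      finally show ?thesis .
    qed
  qed
qed

section \<open>Substituting X for E\<close>

text \<open>Xlin n G x is G, extended linearly from letters, evaluated at X_x; Xmult n F xs is F,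
  extended multilinearly, evaluated at X_x1 ... X_xm.\<close>
definition Xlin :: "nat \<Rightarrow> (nat \<times> nat \<Rightarrow> complex) \<Rightarrow> nat \<times> nat \<Rightarrow> complex" where
  "Xlin n G x = (\<Sum>(e, c)\<leftarrow>Xexp n x. c * G e)"

definition Xmult :: "nat \<Rightarrow> ((nat \<times> nat) list \<Rightarrow> complex) \<Rightarrow> (nat \<times> nat) list \<Rightarrow> complex" where
  "Xmult n F xs = (\<Sum>c\<leftarrow>product_lists (map (Xexp n) xs). prod_list (map snd c) * F (map fst c))"

definition traceless :: "nat \<Rightarrow> (nat \<Rightarrow> complex) \<Rightarrow> nat \<Rightarrow> complex" where
  "traceless n h i = h i - (\<Sum>l\<in>{1..n}. h l) / of_nat n"

lemma sum_list_map_swap: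
  "(\<Sum>a\<leftarrow>xs. \<Sum>b\<leftarrow>ys. f a b) = (\<Sum>b\<leftarrow>ys. \<Sum>a\<leftarrow>xs. (f a b :: 'a::comm_monoid_add))"
  by (induction xs) (simp_all add: sum_list_addf)

lemma sum_list_upt_eq_sum: "(\<Sum>l\<leftarrow>[1..<n+1]. f l) = (\<Sum>l\<in>{1..n}. (f l :: 'a::comm_monoid_add))"
  by (simp only: interv_sum_list_conv_sum_set_nat set_upt) (simp add: atLeastLessThanSuc_atLeastAtMost)

lemma vcoefX_eq_Xmult: "vcoefX n h = Xmult n (vcoef h)"
  by (simp add: vcoefX_def Xmult_def fun_eq_iff)

lemma Xmult_Nil [simp]: "Xmult n F [] = F []"
  by (simp add: Xmult_def)

lemma Xmult_Cons: "Xmult n F (x # xs) = Xlin n (\<lambda>e. Xmult n (\<lambda>w. F (e # w)) xs) x"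
proof -
  have "(\<Sum>c\<leftarrow>concat (map (\<lambda>x. map ((#) x) P) L). prod_list (map snd c) * F (map fst c))
      = (\<Sum>(e, c)\<leftarrow>L. c * (\<Sum>c\<leftarrow>P. prod_list (map snd c) * F (e # map fst c)))" for P L
    by (induction L) (auto simp: comp_def sum_list_const_mult mult.assoc)
  then show ?thesis unfolding Xmult_def Xlin_def by simp
qed

lemma Xmult_add: "Xmult n (\<lambda>w. F w + G w) xs = Xmult n F xs + Xmult n G xs"
  unfolding Xmult_def by (simp add: distrib_left sum_list_addf)

lemma Xmult_diff: "Xmult n (\<lambda>w. F w - G w) xs = Xmult n F xs - Xmult n G xs"
  unfolding Xmult_def by (simp add: right_diff_distrib sum_list_subtractf)

lemma Xmult_mult_left: "Xmult n (\<lambda>w. c * F w) xs = c * Xmult n F xs"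
  unfolding Xmult_def by (simp add: sum_list_const_mult algebra_simps)

lemma Xmult_zero [simp]: "Xmult n (\<lambda>w. 0) xs = 0"
  using Xmult_mult_left[of n 0 "\<lambda>w. 0" xs] by simp

lemma Xmult_append: "Xmult n F (A @ B) = Xmult n (\<lambda>u. Xmult n (\<lambda>v. F (u @ v)) B) A"
  by (induction A arbitrary: F) (simp_all add: Xmult_Cons)

lemma Xmult_bracket: "Xmult n (\<lambda>v. bracket (\<lambda>m. G m v) x y) xs = bracket (\<lambda>m. Xmult n (G m) xs) x y"
  unfolding bracket_def by (simp add: Xmult_diff)

lemma Xlin_cong: "(\<And>e. F e = G e) \<Longrightarrow> Xlin n F x = Xlin n G x"
  by (simp add: Xlin_def)

lemma Xlin_add: "Xlin n (\<lambda>e. F e + G e) x = Xlin n F x + Xlin n G x"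
  unfolding Xlin_def case_prod_beta by (simp add: distrib_left sum_list_addf)

lemma Xlin_Xlin_swap: "Xlin n (\<lambda>a. Xlin n (\<lambda>b. H a b) y) x = Xlin n (\<lambda>b. Xlin n (\<lambda>a. H a b) x) y"
  unfolding Xlin_def case_prod_beta sum_list_const_mult[symmetric]
  by (subst sum_list_map_swap) (simp add: ac_simps)

lemma Xlin_nondiag: "fst x \<noteq> snd x \<Longrightarrow> Xlin n G x = G x"
  by (simp add: Xlin_def Xexp_def)

lemma Xlin_diag: "Xlin n G (a, a) = G (a, a) - (\<Sum>l\<in>{1..n}. G (l, l)) / of_nat n"
proof -
  have "(\<Sum>l\<leftarrow>[1..<n+1]. - 1 / of_nat n * G (l, l)) = - (\<Sum>l\<in>{1..n}. G (l, l)) / of_nat n"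
    unfolding sum_list_upt_eq_sum by (simp add: sum_negf sum_divide_distrib)
  then show ?thesis by (simp del: upt_Suc add: Xlin_def Xexp_def comp_def)
qed

lemma sum_bracket_diag:
  assumes "fst y \<in> {1..n}" "snd y \<in> {1..n}"
  shows "(\<Sum>l\<in>{1..n}. bracket G (l, l) y) = 0"
  using assms by (simp add: bracket_def sum_subtractf sum.delta sum.delta')

lemma bracket_diag_diag [simp]: "bracket G (a, a) (c, c) = 0"
  by (simp add: bracket_def)

text \<open>The trace part of X_aa is central, so X_x X_y - X_y X_x = X_[x,y].\<close>
lemma Xlin_bracket:
  assumes "fst x \<in> {1..n}" "snd x \<in> {1..n}" "fst y \<in> {1..n}" "snd y \<in> {1..n}"
  shows "Xlin n (\<lambda>ex. Xlin n (\<lambda>ey. bracket G ex ey) y) x = bracket (Xlin n G) x y"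
proof -
  obtain a b c d where x: "x = (a, b)" and y: "y = (c, d)" by force
  have sum_right: "(\<Sum>l\<in>{1..n}. bracket G x (l, l)) = 0"
    using sum_bracket_diag[OF assms(1,2), of G] bracket_antisym[of G x] by (simp add: sum_negf)
  have "Xlin n (\<lambda>ex. Xlin n (\<lambda>ey. bracket G ex ey) y) x = bracket G x y"
  proof (cases "a = b"; cases "c = d")
    assume "a = b" "c \<noteq> d"
    then show ?thesis using sum_bracket_diag[OF assms(3,4), of G] by (simp add: x y Xlin_diag Xlin_nondiag)
  next
    assume "a \<noteq> b" "c = d"
    then show ?thesis using sum_right by (simp add: x y Xlin_diag Xlin_nondiag)
  qed (simp_all add: x y Xlin_diag Xlin_nondiag)
  also have "\<dots> = bracket (Xlin n G) x y"
    by (cases "a = b"; cases "c = d") (auto simp: x y bracket_def Xlin_nondiag Xlin_diag)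
  finally show ?thesis .
qed

lemma vcoefX_Nil [simp]: "vcoefX n h [] = 1"
  by (simp add: vcoefX_eq_Xmult)

lemma vcoefX_commute:
  assumes "fst x \<in> {1..n}" "snd x \<in> {1..n}" "fst y \<in> {1..n}" "snd y \<in> {1..n}"
  shows "vcoefX n h (A @ x # y # B) = vcoefX n h (A @ y # x # B) + bracket (\<lambda>m. vcoefX n h (A @ m # B)) x y"
proof -
  have commute_after: "Xmult n (\<lambda>v. vcoef h (u @ v)) (x # y # B)
      = Xmult n (\<lambda>v. vcoef h (u @ v)) (y # x # B) + bracket (\<lambda>m. Xmult n (\<lambda>v. vcoef h (u @ v)) (m # B)) x y"
    for u
  proof -
    have letters: "Xmult n (\<lambda>v. vcoef h (u @ ex # ey # v)) B = Xmult n (\<lambda>v. vcoef h (u @ ey # ex # v)) B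
        + bracket (\<lambda>m. Xmult n (\<lambda>v. vcoef h (u @ m # v)) B) ex ey" for ex ey
      unfolding Xmult_bracket[symmetric] Xmult_add[symmetric]
      by (rule arg_cong[where f = "\<lambda>F. Xmult n F B"], rule ext, rule vcoef_commute)
    have "Xmult n (\<lambda>v. vcoef h (u @ v)) (x # y # B)
        = Xlin n (\<lambda>ex. Xlin n (\<lambda>ey. Xmult n (\<lambda>v. vcoef h (u @ ex # ey # v)) B) y) x"
      by (simp add: Xmult_Cons)
    also have "\<dots> = Xlin n (\<lambda>ex. Xlin n (\<lambda>ey. Xmult n (\<lambda>v. vcoef h (u @ ey # ex # v)) B
        + bracket (\<lambda>m. Xmult n (\<lambda>v. vcoef h (u @ m # v)) B) ex ey) y) x"
      by (intro Xlin_cong letters)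
    also have "\<dots> = Xlin n (\<lambda>ex. Xlin n (\<lambda>ey. Xmult n (\<lambda>v. vcoef h (u @ ey # ex # v)) B) y) x
        + Xlin n (\<lambda>ex. Xlin n (\<lambda>ey. bracket (\<lambda>m. Xmult n (\<lambda>v. vcoef h (u @ m # v)) B) ex ey) y) x"
      by (simp only: Xlin_add)
    also have "\<dots> = Xmult n (\<lambda>v. vcoef h (u @ v)) (y # x # B)
        + bracket (\<lambda>m. Xmult n (\<lambda>v. vcoef h (u @ v)) (m # B)) x y"
      unfolding Xlin_bracket[OF assms] by (simp add: Xmult_Cons Xlin_Xlin_swap[of n _ y x])
    finally show ?thesis .
  qed
  show ?thesis
    unfolding vcoefX_eq_Xmult Xmult_append[of n _ A] commute_after Xmult_add Xmult_bracket by simp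
qed

lemma vcoefX_Cons_lowering: "snd x < fst x \<Longrightarrow> vcoefX n h (x # w) = 0"
  by (simp add: vcoefX_eq_Xmult Xmult_Cons Xlin_nondiag vcoef_Cons_lowering)

lemma vcoefX_snoc_raising: "raising r \<Longrightarrow> vcoefX n h (w @ [r]) = 0"
  by (simp add: vcoefX_eq_Xmult Xmult_append Xmult_Cons Xlin_nondiag vcoef_snoc_raising raising_def)

lemma vcoefX_snoc_diag: "vcoefX n h (w @ [(a, a)]) = traceless n h a * vcoefX n h w"
proof -
  have "Xmult n (\<lambda>v. vcoef h (u @ v)) [(a, a)] = traceless n h a * vcoef h u" for u
    by (simp add: Xmult_Cons Xlin_diag vcoef_snoc_diag traceless_def
        sum_distrib_right[symmetric] algebra_simps)
  then show ?thesis unfolding vcoefX_eq_Xmult Xmult_append by (simp add: Xmult_mult_left)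
qed

section \<open>Path sums\<close>

text \<open>path_sum n F m i j sums F over the words (i, l_1) (l_1, l_2) ... (l_m, j) with all l_r in {1..n}.\<close>
fun path_sum :: "nat \<Rightarrow> ((nat \<times> nat) list \<Rightarrow> 'a::comm_monoid_add) \<Rightarrow> nat \<Rightarrow> nat \<Rightarrow> nat \<Rightarrow> 'a" where
  "path_sum n F 0 i j = F [(i, j)]"
| "path_sum n F (Suc m) i j = (\<Sum>l\<in>{1..n}. path_sum n (\<lambda>w. F ((i, l) # w)) m l j)"

lemma path_sum_add: "path_sum n (\<lambda>w. F w + G w) m i j = path_sum n F m i j + path_sum n G m i j"
  by (induction m arbitrary: F G i) (simp_all add: sum.distrib)

lemma path_sum_diff:
  "path_sum n (\<lambda>w. F w - G w) m i j = path_sum n F m i j - (path_sum n G m i j :: 'a::ab_group_add)"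
  by (induction m arbitrary: F G i) (simp_all add: sum_subtractf)

lemma path_sum_mult_left: "path_sum n (\<lambda>w. c * F w) m i j = (c::'a::semiring_0) * path_sum n F m i j"
  by (induction m arbitrary: F i) (simp_all add: sum_distrib_left)

lemma path_sum_zero [simp]: "path_sum n (\<lambda>w. 0) m i j = 0"
  by (induction m arbitrary: i) simp_all

lemma path_sum_if: "path_sum n (\<lambda>w. if c then F w else 0) m i j = (if c then path_sum n F m i j else 0)"
  by (cases c) simp_all

text \<open>Commuting E_ab through a path from i to j only leaves the two end terms: the middle
  terms of the commutator telescope.\<close>
lemma path_sum_move_letter:
  assumes ab: "a \<in> {1..n}" "b \<in> {1..n}" and i: "i \<in> {1..n}" and j: "j \<in> {1..n}"
  shows "path_sum n (\<lambda>w. vcoefX n h (A @ (a, b) # w @ B)) m i j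
       = path_sum n (\<lambda>w. vcoefX n h (A @ w @ (a, b) # B)) m i j
         + (if b = i then path_sum n (\<lambda>w. vcoefX n h (A @ w @ B)) m a j else 0)
         - (if j = a then path_sum n (\<lambda>w. vcoefX n h (A @ w @ B)) m i b else 0)"
  using i
proof (induction m arbitrary: A i)
  case 0
  then show ?case using vcoefX_commute[of "(a, b)" n "(i, j)" h A B] ab j by (simp add: bracket_def)
next
  case (Suc m)
  let ?P = "vcoefX n h"
  let ?S = "\<lambda>A' m' i' j'. path_sum n (\<lambda>w. ?P (A' @ w @ B)) m' i' j'"
  have step: "path_sum n (\<lambda>w. ?P (A @ (a, b) # (i, l) # w @ B)) m l j
      = path_sum n (\<lambda>w. ?P (A @ (i, l) # w @ (a, b) # B)) m l j
        + (if b = l then ?S (A @ [(i, l)]) m a j else 0)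
        - (if j = a then ?S (A @ [(i, l)]) m l b else 0)
        + ((if b = i then ?S (A @ [(a, l)]) m l j else 0)
        - (if l = a then ?S (A @ [(i, b)]) m l j else 0))"
    if l: "l \<in> {1..n}" for l
  proof -
    have "?P (A @ (a, b) # (i, l) # w @ B) = ?P (A @ (i, l) # (a, b) # w @ B)
        + ((if b = i then ?P (A @ (a, l) # w @ B) else 0)
        - (if l = a then ?P (A @ (i, b) # w @ B) else 0))" for w
      using vcoefX_commute[of "(a, b)" n "(i, l)" h A "w @ B"] ab Suc.prems l by (simp add: bracket_def)
    then show ?thesis
      using Suc.IH[of l "A @ [(i, l)]"] l by (simp add: path_sum_add path_sum_diff path_sum_if)
  qed
  have "path_sum n (\<lambda>w. ?P (A @ (a, b) # w @ B)) (Suc m) i j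
      = (\<Sum>l\<in>{1..n}. path_sum n (\<lambda>w. ?P (A @ (a, b) # (i, l) # w @ B)) m l j)"
    by simp
  also have "\<dots> = (\<Sum>l\<in>{1..n}. path_sum n (\<lambda>w. ?P (A @ (i, l) # w @ (a, b) # B)) m l j
        + (if b = l then ?S (A @ [(i, l)]) m a j else 0)
        - (if j = a then ?S (A @ [(i, l)]) m l b else 0)
        + ((if b = i then ?S (A @ [(a, l)]) m l j else 0)
        - (if l = a then ?S (A @ [(i, b)]) m l j else 0)))"
    by (rule sum.cong) (simp_all add: step)
  also have "\<dots> = path_sum n (\<lambda>w. ?P (A @ w @ (a, b) # B)) (Suc m) i j
         + (if b = i then ?S A (Suc m) a j else 0) - (if j = a then ?S A (Suc m) i b else 0)"
    using ab by (simp add: sum.distrib sum_subtractf if_distrib[of "\<lambda>x. sum x _"] cong: if_cong)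
  finally show ?case .
qed

lemma path_sum_diag_Suc:
  assumes i: "i \<in> {1..n}"
  shows "path_sum n (vcoefX n h) (Suc m) i i
       = (traceless n h i + of_nat (n - i)) * path_sum n (vcoefX n h) m i i
         - (\<Sum>l\<in>{i<..n}. path_sum n (vcoefX n h) m l l)"
proof -
  let ?P = "vcoefX n h"
  let ?c = "\<lambda>l. path_sum n ?P m l l"
  let ?f = "\<lambda>l. path_sum n (\<lambda>w. ?P ((i, l) # w)) m l i"
  have lower: "?f l = 0" if "l < i" for l
    using that by (simp add: vcoefX_Cons_lowering)
  have diag: "?f i = traceless n h i * ?c i"
    using path_sum_move_letter[OF i i i i, of h "[]" "[]" m]
    by (simp add: vcoefX_snoc_diag path_sum_mult_left)
  have upper: "?f l = ?c i - ?c l" if "i < l" "l \<in> {1..n}" for l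
    using path_sum_move_letter[OF i that(2) that(2) i, of h "[]" "[]" m] that
    by (simp add: vcoefX_snoc_raising raising_def)
  have "path_sum n ?P (Suc m) i i = (\<Sum>l\<in>{i..n}. ?f l)"
    unfolding path_sum.simps by (rule sum.mono_neutral_right) (use i lower in auto)
  also have "\<dots> = ?f i + (\<Sum>l\<in>{i<..n}. ?f l)"
    by (rule sum.head) (use i in simp)
  also have "\<dots> = traceless n h i * ?c i + (\<Sum>l\<in>{i<..n}. ?c i - ?c l)"
    using diag upper i by simp
  finally show ?thesis by (simp add: sum_subtractf algebra_simps)
qed

fun diag_path_rec :: "nat \<Rightarrow> (nat \<Rightarrow> complex) \<Rightarrow> nat \<Rightarrow> nat \<Rightarrow> complex" where
  "diag_path_rec n g 0 i = 1"
| "diag_path_rec n g (Suc m) i =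
     (g i + of_nat (n - i)) * diag_path_rec n g m i - (\<Sum>l\<in>{i<..n}. diag_path_rec n g m l)"

lemma path_sum_diag_eq_rec:
  "i \<in> {1..n} \<Longrightarrow> path_sum n (vcoefX n h) m i i = diag_path_rec n (traceless n h) (Suc m) i"
proof (induction m arbitrary: i)
  case 0
  then show ?case using vcoefX_snoc_diag[of n h "[]" i] by simp
next
  case (Suc m)
  have "(\<Sum>l\<in>{i<..n}. path_sum n (vcoefX n h) m l l)
      = (\<Sum>l\<in>{i<..n}. diag_path_rec n (traceless n h) (Suc m) l)"
    by (rule sum.cong) (use Suc in auto)
  then show ?case using path_sum_diag_Suc[OF Suc.prems, of h m] Suc.IH[OF Suc.prems] by simp
qed

lemma sum_list_map_concat: "(\<Sum>x\<leftarrow>concat xss. f x) = (\<Sum>xs\<leftarrow>xss. \<Sum>x\<leftarrow>xs. (f x :: 'a::monoid_add))"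
  by (induction xss) simp_all

fun path_word :: "nat \<Rightarrow> nat list \<Rightarrow> nat \<Rightarrow> (nat \<times> nat) list" where
  "path_word i [] j = [(i, j)]"
| "path_word i (l # ls) j = (i, l) # path_word l ls j"

lemma nth_path_word: "q \<le> length ls \<Longrightarrow> path_word i ls j ! q = ((i # ls) ! q, (ls @ [j]) ! q)"
  by (induction ls arbitrary: i q) (auto simp: nth_Cons split: nat.split)

lemma length_path_word [simp]: "length (path_word i ls j) = Suc (length ls)"
  by (induction ls arbitrary: i) auto

lemma cycword_Cons: "cycword (i # ls) = path_word i ls i"
proof (rule nth_equalityI)
  fix q assume "q < length (cycword (i # ls))"
  then consider "q < length ls" | "q = length ls" by (fastforce simp: cycword_def)
  then show "cycword (i # ls) ! q = path_word i ls i ! q"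
    by cases (simp_all add: cycword_def nth_path_word nth_append)
qed (simp add: cycword_def)

lemma sum_n_lists_path_word:
  "(\<Sum>ls\<leftarrow>List.n_lists m [1..<n+1]. F (path_word i ls j)) = path_sum n F m i j"
proof (induction m arbitrary: F i)
  case (Suc m)
  have "(\<Sum>ls\<leftarrow>List.n_lists (Suc m) [1..<n+1]. F (path_word i ls j))
      = (\<Sum>ls\<leftarrow>List.n_lists m [1..<n+1]. \<Sum>l\<leftarrow>[1..<n+1]. F ((i, l) # path_word l ls j))"
    by (simp add: comp_def sum_list_map_concat del: upt_Suc)
  also have "\<dots> = (\<Sum>l\<leftarrow>[1..<n+1]. \<Sum>ls\<leftarrow>List.n_lists m [1..<n+1]. F ((i, l) # path_word l ls j))"
    by (rule sum_list_map_swap)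
  also have "\<dots> = (\<Sum>l\<leftarrow>[1..<n+1]. path_sum n (\<lambda>w. F ((i, l) # w)) m l j)"
    using Suc.IH[of "\<lambda>w. F ((i, _) # w)"] by simp
  also have "\<dots> = path_sum n F (Suc m) i j"
    unfolding sum_list_upt_eq_sum by simp
  finally show ?case .
qed simp

lemma chi_Suc: "chi n mu (Suc m) = (\<Sum>i\<in>{1..n}. diag_path_rec n (traceless n (gl_lift n mu)) (Suc m) i)"
proof -
  let ?P = "vcoefX n (gl_lift n mu)"
  have "chi n mu (Suc m) = (\<Sum>ls\<leftarrow>List.n_lists m [1..<n+1]. \<Sum>i\<leftarrow>[1..<n+1]. ?P (path_word i ls i))"
    by (simp add: chi_def comp_def sum_list_map_concat cycword_Cons del: upt_Suc)
  also have "\<dots> = (\<Sum>i\<leftarrow>[1..<n+1]. \<Sum>ls\<leftarrow>List.n_lists m [1..<n+1]. ?P (path_word i ls i))"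
    by (rule sum_list_map_swap)
  also have "\<dots> = (\<Sum>i\<in>{1..n}. path_sum n ?P m i i)"
    unfolding sum_n_lists_path_word sum_list_upt_eq_sum ..
  finally show ?thesis by (simp add: path_sum_diag_eq_rec)
qed

section \<open>Generating functions\<close>

unbundle fps_syntax

definition logderiv :: "'a::field fps \<Rightarrow> 'a fps" where
  "logderiv f = fps_deriv f * inverse f"

definition linear_factor :: "'a::field \<Rightarrow> 'a fps" where
  "linear_factor c = 1 - fps_const c * fps_X"

definition vanishes_below :: "nat \<Rightarrow> 'a::zero fps \<Rightarrow> bool" where
  "vanishes_below k f \<longleftrightarrow> (\<forall>j<k. f $ j = 0)"

lemma logderiv_mult:
  assumes "f $ 0 \<noteq> 0" "g $ 0 \<noteq> 0"
  shows "logderiv (f * g) = logderiv f + logderiv g"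
proof -
  have "f * inverse f = 1" "g * inverse g = 1" using inverse_mult_eq_1' assms by auto
  moreover have "logderiv (f * g)
      = fps_deriv f * inverse f * (g * inverse g) + fps_deriv g * inverse g * (f * inverse f)"
    by (simp add: logderiv_def fps_inverse_mult algebra_simps)
  ultimately show ?thesis by (simp add: logderiv_def)
qed

lemma logderiv_inverse:
  assumes "f $ 0 \<noteq> 0"
  shows "logderiv (inverse f) = - logderiv f"
proof -
  have "inverse f * f = 1" using inverse_mult_eq_1 assms by auto
  moreover have "logderiv (inverse f) = - (fps_deriv f * inverse f) * (inverse f * f)"
    using assms by (simp add: logderiv_def fps_inverse_deriv power2_eq_square algebra_simps)
  ultimately show ?thesis by (simp add: logderiv_def)
qed

lemma prod_linear_factor_nth_0 [simp]: "(\<Prod>i\<in>S. linear_factor (c i)) $ 0 = 1"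
  by (induction S rule: infinite_finite_induct) (simp_all add: linear_factor_def)

lemma logderiv_prod_linear_factor:
  "finite S \<Longrightarrow> logderiv (\<Prod>i\<in>S. linear_factor (c i)) = (\<Sum>i\<in>S. logderiv (linear_factor (c i)))"
proof (induction S rule: finite_induct)
  case (insert x S)
  have "linear_factor (c x) $ 0 \<noteq> 0" by (simp add: linear_factor_def)
  with insert show ?case by (simp add: logderiv_mult)
qed (simp add: logderiv_def)

lemma inverse_linear_factor: "inverse (linear_factor c) = Abs_fps (\<lambda>m. c ^ m)"
proof (rule fps_inverse_unique, rule fps_ext)
  fix m
  show "(linear_factor c * Abs_fps (\<lambda>m. c ^ m)) $ m = 1 $ m"
    by (cases m) (simp_all add: linear_factor_def algebra_simps)
qed

lemma logderiv_linear_factor_nth: "logderiv (linear_factor c) $ m = - (c ^ Suc m)"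
proof -
  have "logderiv (linear_factor c) = - fps_const c * Abs_fps (\<lambda>m. c ^ m)"
    by (simp add: logderiv_def inverse_linear_factor) (simp add: linear_factor_def)
  then show ?thesis by simp
qed

lemma vanishes_below_mult_left: "vanishes_below k f \<Longrightarrow> vanishes_below k (f * (g :: 'a::comm_ring_1 fps))"
  by (auto simp: vanishes_below_def fps_mult_nth intro!: sum.neutral)

lemma vanishes_below_mult_right: "vanishes_below k f \<Longrightarrow> vanishes_below k ((g :: 'a::comm_ring_1 fps) * f)"
  using vanishes_below_mult_left[of k f g] by (simp add: mult.commute)

lemma logderiv_diff_vanishes_below:
  assumes "f $ 0 \<noteq> 0" "g $ 0 \<noteq> 0" "vanishes_below (Suc k) (f - g)"
  shows "vanishes_below k (logderiv f - logderiv g)"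
proof -
  have inv: "f * inverse f = 1" "g * inverse g = 1" using inverse_mult_eq_1' assms by auto
  have "inverse f * inverse g * (g - f) = inverse f * (g * inverse g) - (f * inverse f) * inverse g"
    by (simp add: algebra_simps)
  also have "\<dots> = inverse f - inverse g" using inv by simp
  finally have inv_diff: "inverse f - inverse g = inverse f * inverse g * (g - f)" ..
  have "logderiv f - logderiv g = fps_deriv (f - g) * inverse f + fps_deriv g * (inverse f - inverse g)"
    by (simp add: logderiv_def algebra_simps)
  also have "\<dots> = fps_deriv (f - g) * inverse f + fps_deriv g * (inverse f * inverse g * (g - f))"
    unfolding inv_diff ..
  finally have split: "logderiv f - logderiv g = \<dots>" .
  have "vanishes_below k (fps_deriv (f - g))" "vanishes_below k (g - f)"
    using assms(3) by (simp_all add: vanishes_below_def)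
  then have "vanishes_below k (fps_deriv (f - g) * inverse f)"
    "vanishes_below k (fps_deriv g * (inverse f * inverse g * (g - f)))"
    by (simp_all add: vanishes_below_mult_left vanishes_below_mult_right)
  then show ?thesis unfolding split vanishes_below_def by simp
qed

definition rho_shifted :: "nat \<Rightarrow> (nat \<Rightarrow> complex) \<Rightarrow> nat \<Rightarrow> complex" where
  "rho_shifted n g i = g i + of_nat (n - i)"

definition diag_path_fps :: "nat \<Rightarrow> (nat \<Rightarrow> complex) \<Rightarrow> nat \<Rightarrow> complex fps" where
  "diag_path_fps n g i = Abs_fps (\<lambda>m. diag_path_rec n g m i)"

definition trace_gen :: "nat \<Rightarrow> (nat \<Rightarrow> complex) \<Rightarrow> complex fps" where
  "trace_gen n g = 1 - fps_X * (\<Sum>j\<in>{1..n}. diag_path_fps n g j)"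

lemma diag_path_fps_mult_linear_factor:
  "diag_path_fps n g i * linear_factor (rho_shifted n g i) = 1 - fps_X * (\<Sum>j\<in>{i<..n}. diag_path_fps n g j)"
proof (rule fps_ext)
  fix m
  show "(diag_path_fps n g i * linear_factor (rho_shifted n g i)) $ m
      = (1 - fps_X * (\<Sum>j\<in>{i<..n}. diag_path_fps n g j)) $ m"
    by (cases m) (simp_all add: diag_path_fps_def linear_factor_def rho_shifted_def fps_sum_nth algebra_simps)
qed

lemma trace_gen_mult_prod_aux:
  "(1 - fps_X * (\<Sum>j\<in>{i..n}. diag_path_fps n g j)) * (\<Prod>j\<in>{i..n}. linear_factor (rho_shifted n g j))
   = (\<Prod>j\<in>{i..n}. linear_factor (rho_shifted n g j + 1))"
proof (induction "Suc n - i" arbitrary: i)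
  case (Suc t)
  then have split: "{i..n} = insert i {Suc i..n}" "{i<..n} = {Suc i..n}" by auto
  let ?A = "1 - fps_X * (\<Sum>j\<in>{Suc i..n}. diag_path_fps n g j)"
  let ?Q = "\<Prod>j\<in>{Suc i..n}. linear_factor (rho_shifted n g j)"
  let ?G = "diag_path_fps n g i"
  let ?d = "rho_shifted n g i"
  have G: "?G * linear_factor ?d = ?A"
    using diag_path_fps_mult_linear_factor[of n g i] split by simp
  have "(1 - fps_X * (\<Sum>j\<in>{i..n}. diag_path_fps n g j)) * (\<Prod>j\<in>{i..n}. linear_factor (rho_shifted n g j))
      = ?A * ?Q * linear_factor ?d - fps_X * (?G * linear_factor ?d) * ?Q"
    by (simp add: split(1) algebra_simps)
  also have "\<dots> = ?A * ?Q * linear_factor (?d + 1)"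
    unfolding G by (simp add: linear_factor_def algebra_simps fps_const_add[symmetric])
  also have "\<dots> = (\<Prod>j\<in>{i..n}. linear_factor (rho_shifted n g j + 1))"
    using Suc by (simp add: split(1))
  finally show ?case .
qed simp

text \<open>The generating function of the traces is a ratio of products of linear factors, so its
  logarithmic derivative has power sums as coefficients.\<close>
lemma logderiv_trace_gen_nth:
  "logderiv (trace_gen n g) $ m = (\<Sum>i\<in>{1..n}. rho_shifted n g i ^ Suc m - (rho_shifted n g i + 1) ^ Suc m)"
proof -
  let ?E = "\<Prod>j\<in>{1..n}. linear_factor (rho_shifted n g j)"
  let ?E1 = "\<Prod>j\<in>{1..n}. linear_factor (rho_shifted n g j + 1)"
  have "trace_gen n g = trace_gen n g * (?E * inverse ?E)"
    using inverse_mult_eq_1'[of ?E] by simp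
  also have "\<dots> = ?E1 * inverse ?E"
    using trace_gen_mult_prod_aux[where i = 1] by (simp add: trace_gen_def mult.assoc[symmetric])
  finally have "logderiv (trace_gen n g) = logderiv ?E1 - logderiv ?E"
    by (simp add: logderiv_mult logderiv_inverse)
  then show ?thesis
    by (simp add: logderiv_prod_linear_factor fps_sum_nth logderiv_linear_factor_nth sum_subtractf[symmetric])
qed

lemma rho_power_sums_eq_if_diag_path_sums_eq:
  assumes "\<forall>m\<le>k. (\<Sum>i\<in>{1..n}. diag_path_rec n g1 m i) = (\<Sum>i\<in>{1..n}. diag_path_rec n g2 m i)" "m \<le> k"
  shows "(\<Sum>i\<in>{1..n}. rho_shifted n g1 i ^ Suc m - (rho_shifted n g1 i + 1) ^ Suc m)
       = (\<Sum>i\<in>{1..n}. rho_shifted n g2 i ^ Suc m - (rho_shifted n g2 i + 1) ^ Suc m)"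
proof -
  have "vanishes_below (Suc (Suc k)) (trace_gen n g1 - trace_gen n g2)"
    unfolding vanishes_below_def
  proof (intro allI impI)
    fix j assume "j < Suc (Suc k)"
    with assms(1) show "(trace_gen n g1 - trace_gen n g2) $ j = 0"
      by (cases j) (simp_all add: trace_gen_def fps_sum_nth diag_path_fps_def del: diag_path_rec.simps)
  qed
  then have "vanishes_below (Suc k) (logderiv (trace_gen n g1) - logderiv (trace_gen n g2))"
    by (rule logderiv_diff_vanishes_below[rotated 2]) (simp_all add: trace_gen_def)
  with assms(2) show ?thesis by (simp add: vanishes_below_def logderiv_trace_gen_nth)
qed

section \<open>Power sums and Newton's identities\<close>

definition power_sum :: "(nat \<Rightarrow> 'a::comm_semiring_1) \<Rightarrow> nat set \<Rightarrow> nat \<Rightarrow> 'a" where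
  "power_sum a S t = (\<Sum>i\<in>S. a i ^ t)"

definition second_diff_power :: "nat \<Rightarrow> 'a::comm_ring_1 \<Rightarrow> 'a" where
  "second_diff_power m x = (x + 2) ^ m - 2 * (x + 1) ^ m + x ^ m"

lemma second_diff_power_expand:
  fixes x :: "'a::comm_ring_1"
  shows "second_diff_power (e + 2) x = (\<Sum>t\<le>e. of_nat ((e + 2) choose t) * (2 ^ (e + 2 - t) - 2) * x ^ t)"
proof -
  let ?N = "e + 2"
  let ?g = "\<lambda>t. of_nat (?N choose t) * (2 ^ (?N - t) - 2) * x ^ t :: 'a"
  have "(x + 2) ^ ?N - 2 * (x + 1) ^ ?N = (\<Sum>t\<le>?N. ?g t)"
    unfolding binomial_ring[of x 2] binomial_ring[of x 1] sum_distrib_left sum_subtractf[symmetric]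
    by (rule sum.cong) (simp_all add: algebra_simps)
  also have "\<dots> = (\<Sum>t\<le>e. ?g t) + ?g (e + 1) + ?g (e + 2)"
    by (simp add: numeral_2_eq_2)
  also have "?g (e + 1) = 0" by (simp add: numeral_2_eq_2)
  finally show ?thesis by (simp add: second_diff_power_def)
qed

text \<open>Sums of second differences of powers determine the power sums, since the expansion of
  second_diff_power (e + 2) is triangular with nonzero leading coefficient 2 (e + 2 choose e).\<close>
lemma power_sums_eq_if_second_diff_sums_eq:
  fixes a :: "nat \<Rightarrow> 'a::field_char_0"
  assumes "finite I" "finite J"
    and "\<forall>m\<le>k. (\<Sum>i\<in>I. second_diff_power (Suc m) (a i)) = (\<Sum>i\<in>J. second_diff_power (Suc m) (a i))"
  shows "e < k \<Longrightarrow> power_sum a I e = power_sum a J e"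
proof (induction e rule: less_induct)
  case (less e)
  let ?c = "\<lambda>t. of_nat ((e + 2) choose t) * (2 ^ (e + 2 - t) - 2) :: 'a"
  have expand: "(\<Sum>i\<in>S. second_diff_power (e + 2) (a i)) = (\<Sum>t\<le>e. ?c t * power_sum a S t)" for S
    unfolding second_diff_power_expand power_sum_def sum_distrib_left by (subst sum.swap) (simp add: ac_simps)
  have "(\<Sum>t\<le>e. ?c t * power_sum a I t) = (\<Sum>t\<le>e. ?c t * power_sum a J t)"
    using expand[of I] expand[of J] assms(3)[rule_format, of "Suc e"] less.prems
    by (simp add: numeral_2_eq_2)
  moreover have "(\<Sum>t<e. ?c t * power_sum a I t) = (\<Sum>t<e. ?c t * power_sum a J t)"
    using less by (intro sum.cong) auto
  ultimately have "?c e * power_sum a I e = ?c e * power_sum a J e"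
    by (simp add: lessThan_Suc_atMost[symmetric])
  moreover have "?c e \<noteq> 0" by simp
  ultimately show ?case by simp
qed

lemma prod_linear_factor_nth_above:
  fixes b :: "nat \<Rightarrow> 'a::field"
  shows "finite S \<Longrightarrow> card S < j \<Longrightarrow> (\<Prod>i\<in>S. linear_factor (b i)) $ j = 0"
proof (induction S arbitrary: j rule: finite_induct)
  case (insert x S)
  then obtain j' where j: "j = Suc j'" by (cases j) auto
  have "(linear_factor c * f) $ Suc j' = f $ Suc j' - c * f $ j'" for c and f :: "'a fps"
    by (simp add: linear_factor_def algebra_simps)
  with insert j show ?case by simp
qed simp

text \<open>Newton's identities in generating-function form: the power sums of exponent 1, ..., q
  determine the logarithmic derivative, hence the product, up to degree q.\<close>
lemma prod_linear_factor_eq_if_power_sums_eq: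
  fixes b :: "nat \<Rightarrow> 'a::field_char_0"
  assumes fin: "finite A" "finite B" and card: "card A = q" "card B = q"
    and sums: "\<forall>e. 1 \<le> e \<and> e \<le> q \<longrightarrow> power_sum b A e = power_sum b B e"
  shows "(\<Prod>i\<in>A. linear_factor (b i)) = (\<Prod>i\<in>B. linear_factor (b i))"
    (is "?PA = ?PB")
proof -
  define r where "r = ?PA * inverse ?PB"
  have r0: "r $ 0 = 1" by (simp add: r_def)
  have "logderiv r = logderiv ?PA - logderiv ?PB"
    unfolding r_def by (simp add: logderiv_mult logderiv_inverse)
  then have "logderiv r $ j = power_sum b B (Suc j) - power_sum b A (Suc j)" for j
    using fin by (simp add: logderiv_prod_linear_factor fps_sum_nth logderiv_linear_factor_nth
        power_sum_def sum_negf)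
  then have "vanishes_below q (logderiv r)"
    using sums by (simp add: vanishes_below_def)
  moreover have "fps_deriv r = logderiv r * r"
    using inverse_mult_eq_1[of r] r0 by (simp add: logderiv_def mult.assoc)
  ultimately have "vanishes_below q (fps_deriv r)"
    by (simp add: vanishes_below_mult_left)
  then have "vanishes_below (Suc q) (r - 1)"
    using r0 by (auto simp: vanishes_below_def less_Suc_eq_0_disj simp del: of_nat_Suc)
  moreover have "?PA - ?PB = (r - 1) * ?PB"
    using inverse_mult_eq_1[of ?PB] by (simp add: r_def algebra_simps)
  ultimately have "vanishes_below (Suc q) (?PA - ?PB)"
    by (simp add: vanishes_below_mult_left)
  show ?thesis
  proof (rule fps_ext)
    fix j
    show "?PA $ j = ?PB $ j"
    proof (cases "j \<le> q")
      case True
      with \<open>vanishes_below (Suc q) (?PA - ?PB)\<close> show ?thesis by (simp add: vanishes_below_def)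
    next
      case False
      with fin card show ?thesis by (simp add: prod_linear_factor_nth_above)
    qed
  qed
qed

lemma prod_linear_factor_eq_imp_mem:
  fixes b :: "nat \<Rightarrow> 'a::field"
  assumes "finite A" "finite B" "(\<Prod>i\<in>A. linear_factor (b i)) = (\<Prod>i\<in>B. linear_factor (b i))"
    and "i0 \<in> A" "b i0 \<noteq> 0"
  shows "\<exists>j\<in>B. b j = b i0"
proof -
  have "linear_factor c = fps_of_poly [:1, - c:]" for c :: 'a
    by (simp add: fps_of_poly_linear' linear_factor_def)
  with assms(3) have "(\<Prod>i\<in>A. [:1, - b i:]) = (\<Prod>i\<in>B. [:1, - b i:])"
    by (simp add: fps_of_poly_prod[symmetric] fps_of_poly_eq_iff)
  then have "poly (\<Prod>i\<in>B. [:1, - b i:]) (inverse (b i0)) = poly (\<Prod>i\<in>A. [:1, - b i:]) (inverse (b i0))"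
    by simp
  also have "\<dots> = 0"
    using assms(1,4,5) by (auto simp: poly_prod prod_zero_iff intro!: bexI[of _ i0])
  finally obtain j where "j \<in> B" "poly [:1, - b j:] (inverse (b i0)) = 0"
    using assms(2) by (auto simp: poly_prod)
  with assms(5) show ?thesis by (auto simp: field_simps)
qed

text \<open>The shift by c makes the value considered nonzero, as the product form requires.\<close>
lemma power_sums_eq_imp_image_subset:
  fixes a :: "nat \<Rightarrow> 'a::field_char_0"
  assumes fin: "finite A" "finite B" and card: "card A = card B"
    and sums: "\<forall>e\<le>card A. power_sum a A e = power_sum a B e"
  shows "a ` A \<subseteq> a ` B"
proof
  fix y assume "y \<in> a ` A"
  then obtain i0 where i0: "i0 \<in> A" "y = a i0" by blast
  obtain c where c: "c \<noteq> - a i0"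
    by (metis add.inverse_inverse add_cancel_right_right zero_neq_one)
  define b where "b i = a i + c" for i
  have shift: "power_sum b S e = (\<Sum>t\<le>e. of_nat (e choose t) * c ^ (e - t) * power_sum a S t)" for S e
  proof -
    have "power_sum b S e = (\<Sum>i\<in>S. \<Sum>t\<le>e. of_nat (e choose t) * c ^ (e - t) * a i ^ t)"
      unfolding power_sum_def b_def binomial_ring by (simp add: ac_simps)
    then show ?thesis by (simp add: power_sum_def sum.swap[of _ S] sum_distrib_left)
  qed
  have "\<forall>e. 1 \<le> e \<and> e \<le> card A \<longrightarrow> power_sum b A e = power_sum b B e"
    unfolding shift using sums by (auto intro!: sum.cong)
  then have "(\<Prod>i\<in>A. linear_factor (b i)) = (\<Prod>i\<in>B. linear_factor (b i))"
    by (intro prod_linear_factor_eq_if_power_sums_eq[OF fin refl card[symmetric]])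
  moreover have "b i0 \<noteq> 0" using c by (simp add: b_def add_eq_0_iff)
  ultimately obtain j where "j \<in> B" "b j = b i0"
    using prod_linear_factor_eq_imp_mem[OF fin _ i0(1)] by blast
  with i0 show "y \<in> a ` B" by (metis b_def add_right_cancel image_eqI)
qed

lemma power_sums_eq_imp_eq:
  fixes a :: "nat \<Rightarrow> 'a::field_char_0"
  assumes "finite A" "finite B" "card A = card B" "inj_on a (A \<union> B)"
    and "\<forall>e\<le>card A. power_sum a A e = power_sum a B e"
  shows "A = B"
proof -
  have "a ` A \<subseteq> a ` B" using assms(1-3,5) by (rule power_sums_eq_imp_image_subset)
  have "A \<subseteq> B"
  proof
    fix x assume "x \<in> A"
    with \<open>a ` A \<subseteq> a ` B\<close> have "a x \<in> a ` B" by blast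
    with \<open>x \<in> A\<close> show "x \<in> B" using inj_on_image_mem_iff[OF assms(4), of x B] by blast
  qed
  with assms(2,3) show ?thesis using card_subset_eq by blast
qed

lemma power_sum_Diff_eq_iff:
  fixes a :: "nat \<Rightarrow> 'a::comm_ring_1"
  assumes "finite I" "finite J"
  shows "power_sum a (I - J) e = power_sum a (J - I) e \<longleftrightarrow> power_sum a I e = power_sum a J e"
  using assms sum.Int_Diff[of I "\<lambda>i. a i ^ e" J] sum.Int_Diff[of J "\<lambda>i. a i ^ e" I]
  by (simp add: power_sum_def Int_commute)

section \<open>The weights nu + lambda_I\<close>

lemma lambdaI_apply:
  assumes "finite I" "1 \<le> i" "i \<le> n - 1"
  shows "lambdaI n I i = of_bool (i \<in> I) - of_bool (Suc i \<in> I)"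
proof -
  have "lambdaI n I i = (\<Sum>t\<in>I. (if t = i then 1 else 0) - (if t = Suc i then 1 else 0))"
    unfolding lambdaI_def by (rule sum.cong) (use assms in \<open>auto simp: omega_def\<close>)
  with assms(1) show ?thesis by (simp add: sum_subtractf sum.delta)
qed

lemma gl_lift_wadd_lambdaI:
  assumes "finite I" "1 \<le> j" "j \<le> n"
  shows "gl_lift n (wadd nu (lambdaI n I)) j = gl_lift n nu j + of_bool (j \<in> I) - of_bool (n \<in> I)"
proof -
  have "(\<Sum>i\<in>{j..n-1}. lambdaI n I i) = - (\<Sum>i\<in>{j..n-1}. of_bool (Suc i \<in> I) - of_bool (i \<in> I))"
    using assms by (simp add: lambdaI_apply sum_negf[symmetric])
  also have "\<dots> = of_bool (j \<in> I) - of_bool (n \<in> I)"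
    using sum_Suc_diff[of j "n - 1" "\<lambda>i. of_bool (i \<in> I) :: int"] assms by simp
  finally show ?thesis by (simp add: gl_lift_def wadd_def sum.distrib)
qed

lemma traceless_wadd_lambdaI:
  assumes "I \<subseteq> {1..n}" "card I = k" "j \<in> {1..n}"
  shows "traceless n (gl_lift n (wadd nu (lambdaI n I))) j
       = traceless n (gl_lift n nu) j + of_bool (j \<in> I) - of_nat k / of_nat n"
proof -
  have fin: "finite I" using assms(1) finite_subset by blast
  have "(\<Sum>l\<in>{1..n}. gl_lift n (wadd nu (lambdaI n I)) l)
      = (\<Sum>l\<in>{1..n}. gl_lift n nu l + of_bool (l \<in> I) - of_bool (n \<in> I))"
    by (rule sum.cong) (use fin in \<open>auto simp: gl_lift_wadd_lambdaI\<close>)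
  also have "\<dots> = (\<Sum>l\<in>{1..n}. gl_lift n nu l) + of_nat k - of_nat n * of_bool (n \<in> I)"
    using assms(1,2) fin by (simp add: sum.distrib sum_subtractf Int_absorb1 Collect_mem_eq)
  finally have sum_eq: "(\<Sum>l\<in>{1..n}. gl_lift n (wadd nu (lambdaI n I)) l) = \<dots>" .
  have lift_eq: "gl_lift n (wadd nu (lambdaI n I)) j = gl_lift n nu j + of_bool (j \<in> I) - of_bool (n \<in> I)"
    using fin assms(3) by (simp add: gl_lift_wadd_lambdaI)
  have "n > 0" using assms(3) by simp
  then show ?thesis
    unfolding traceless_def sum_eq lift_eq by (simp add: field_simps)
qed

definition shifted_base :: "nat \<Rightarrow> (nat \<Rightarrow> int) \<Rightarrow> nat \<Rightarrow> nat \<Rightarrow> complex" where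
  "shifted_base n nu k i = rho_shifted n (traceless n (gl_lift n nu)) i - of_nat k / of_nat n"

lemma rho_shifted_wadd_lambdaI:
  assumes "I \<subseteq> {1..n}" "card I = k" "i \<in> {1..n}"
  shows "rho_shifted n (traceless n (gl_lift n (wadd nu (lambdaI n I)))) i
       = shifted_base n nu k i + of_bool (i \<in> I)"
  by (simp add: rho_shifted_def shifted_base_def traceless_wadd_lambdaI[OF assms])

lemma shifted_base_diff:
  assumes "i \<le> j" "j \<le> n"
  shows "shifted_base n nu k i - shifted_base n nu k j = of_int ((\<Sum>l\<in>{i..<j}. nu l) + int (j - i))"
proof -
  have "{i..n-1} = {i..<j} \<union> {j..n-1}" "{i..<j} \<inter> {j..n-1} = {}" using assms by auto
  then have "(\<Sum>l\<in>{i..n-1}. nu l) = (\<Sum>l\<in>{i..<j}. nu l) + (\<Sum>l\<in>{j..n-1}. nu l)"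
    by (simp add: sum.union_disjoint)
  then have "gl_lift n nu i - gl_lift n nu j = of_int (\<Sum>l\<in>{i..<j}. nu l)"
    by (simp add: gl_lift_def)
  moreover have "of_nat (n - i) - of_nat (n - j) = (of_nat (j - i) :: complex)"
    using assms by (simp add: of_nat_diff)
  moreover have "shifted_base n nu k i - shifted_base n nu k j
      = (gl_lift n nu i - gl_lift n nu j) + (of_nat (n - i) - of_nat (n - j))"
    by (simp add: shifted_base_def rho_shifted_def traceless_def algebra_simps)
  ultimately show ?thesis by simp
qed

text \<open>Dominance makes the shifted base weights strictly decreasing.\<close>
lemma inj_on_shifted_base:
  assumes "dominant_integral n nu"
  shows "inj_on (shifted_base n nu k) {1..n}"
proof -
  have "shifted_base n nu k i \<noteq> shifted_base n nu k j" if "i < j" "i \<in> {1..n}" "j \<in> {1..n}" for i j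
  proof -
    have "0 \<le> (\<Sum>l\<in>{i..<j}. nu l)"
      using assms that by (intro sum_nonneg) (auto simp: dominant_integral_def)
    then have "(\<Sum>l\<in>{i..<j}. nu l) + int (j - i) \<noteq> 0" using that by simp
    moreover have "shifted_base n nu k i - shifted_base n nu k j
        = of_int ((\<Sum>l\<in>{i..<j}. nu l) + int (j - i))"
      using that by (intro shifted_base_diff) auto
    ultimately show ?thesis by (metis eq_iff_diff_eq_0 of_int_eq_0_iff)
  qed
  then show ?thesis by (metis inj_onI linorder_neqE_nat)
qed

lemma sum_traceless: "n > 0 \<Longrightarrow> (\<Sum>i\<in>{1..n}. traceless n h i) = 0"
  by (simp add: traceless_def sum_subtractf)

lemma rho_power_diff_sum_wadd_lambdaI:
  fixes nu :: "nat \<Rightarrow> int"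
  assumes "S \<subseteq> {1..n}" "card S = k"
  defines "d \<equiv> rho_shifted n (traceless n (gl_lift n (wadd nu (lambdaI n S))))"
    and "a \<equiv> shifted_base n nu k"
  shows "(\<Sum>i\<in>{1..n}. d i ^ M - (d i + 1) ^ M)
       = (\<Sum>i\<in>{1..n}. a i ^ M - (a i + 1) ^ M) - (\<Sum>i\<in>S. second_diff_power M (a i))"
proof -
  have "(\<Sum>i\<in>{1..n}. d i ^ M - (d i + 1) ^ M)
      = (\<Sum>i\<in>{1..n}. (a i ^ M - (a i + 1) ^ M) - of_bool (i \<in> S) * second_diff_power M (a i))"
  proof (rule sum.cong)
    fix i assume "i \<in> {1..n}"
    then have "d i = a i + of_bool (i \<in> S)"
      unfolding d_def a_def by (rule rho_shifted_wadd_lambdaI[OF assms(1,2)])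
    moreover have "(x + 1) ^ M - (x + 1 + 1) ^ M = x ^ M - (x + 1) ^ M - second_diff_power M x"
      for x :: complex
      by (simp add: second_diff_power_def add.assoc one_add_one algebra_simps)
    ultimately show "d i ^ M - (d i + 1) ^ M
        = (a i ^ M - (a i + 1) ^ M) - of_bool (i \<in> S) * second_diff_power M (a i)"
      by (cases "i \<in> S") simp_all
  qed simp
  also have "\<dots> = (\<Sum>i\<in>{1..n}. a i ^ M - (a i + 1) ^ M)
      - (\<Sum>i\<in>{1..n} \<inter> {i. i \<in> S}. second_diff_power M (a i))"
    by (simp add: sum_subtractf)
  also have "{1..n} \<inter> {i. i \<in> S} = S" using assms(1) by auto
  finally show ?thesis .
qed

lemma shifted_base_power_sums_eq:
  assumes "1 \<le> k" "I \<subseteq> {1..n}" "card I = k" "J \<subseteq> {1..n}" "card J = k"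
    and fC_eq: "\<forall>p. 2 \<le> p \<and> p \<le> k \<longrightarrow> fC n k p I nu = fC n k p J nu"
    and "e < k"
  shows "power_sum (shifted_base n nu k) I e = power_sum (shifted_base n nu k) J e"
proof -
  let ?g = "\<lambda>S. traceless n (gl_lift n (wadd nu (lambdaI n S)))"
  obtain i where "i \<in> I" using assms(1,3) by fastforce
  with assms(2) have "n > 0" by auto
  have diag_eq: "(\<Sum>i\<in>{1..n}. diag_path_rec n (?g I) m i) = (\<Sum>i\<in>{1..n}. diag_path_rec n (?g J) m i)"
    if "m \<le> k" for m
  proof (cases "m \<le> 1")
    case True
    then consider "m = 0" | "m = 1" by linarith
    then show ?thesis by cases (use sum_traceless[OF \<open>n > 0\<close>] in simp_all)
  next
    case False
    then obtain m' where m': "m = Suc m'" by (cases m) auto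
    have "chi n (wadd nu (lambdaI n I)) m = chi n (wadd nu (lambdaI n J)) m"
      using fC_eq that False by (simp add: fC_def)
    then show ?thesis using chi_Suc[of n _ m'] by (simp add: m' del: diag_path_rec.simps)
  qed
  have "(\<Sum>i\<in>I. second_diff_power (Suc m) (shifted_base n nu k i))
           = (\<Sum>i\<in>J. second_diff_power (Suc m) (shifted_base n nu k i))" if "m \<le> k" for m
  proof -
    have "(\<Sum>i\<in>{1..n}. rho_shifted n (?g I) i ^ Suc m - (rho_shifted n (?g I) i + 1) ^ Suc m)
        = (\<Sum>i\<in>{1..n}. rho_shifted n (?g J) i ^ Suc m - (rho_shifted n (?g J) i + 1) ^ Suc m)"
      by (rule rho_power_sums_eq_if_diag_path_sums_eq) (use diag_eq that in auto)
    then show ?thesis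
      unfolding rho_power_diff_sum_wadd_lambdaI[OF assms(2,3)] rho_power_diff_sum_wadd_lambdaI[OF assms(4,5)]
      by simp
  qed
  moreover have "finite I" "finite J" using assms(2,4) finite_subset by auto
  ultimately show ?thesis
    using power_sums_eq_if_second_diff_sums_eq assms(7) by blast
qed

theorem corollary6p4:
  fixes n k :: nat and I J :: "nat set" and nu :: "nat \<Rightarrow> int"
  assumes "1 \<le> k" and "k \<le> n - k"
    and "I \<subseteq> {1..n}" and "card I = k"
    and "J \<subseteq> {1..n}" and "card J = k"
    and "I \<noteq> J"
    and "dominant_integral n nu"
    and "dominant_integral n (wadd nu (lambdaI n I))"
    and "dominant_integral n (wadd nu (lambdaI n J))"
    and "\<forall>p. 2 \<le> p \<and> p \<le> k \<longrightarrow> fC n k p I nu = fC n k p J nu"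
  shows "card (I \<inter> J) = 0"
proof (rule ccontr)
  assume "card (I \<inter> J) \<noteq> 0"
  let ?a = "shifted_base n nu k"
  have fin: "finite I" "finite J" using assms(3,5) finite_subset by auto
  have card_diff: "card (I - J) = k - card (I \<inter> J)" "card (J - I) = k - card (I \<inter> J)"
    using fin assms(4,6) by (simp_all add: card_Diff_subset_Int Int_commute)
  have "power_sum ?a (I - J) e = power_sum ?a (J - I) e" if "e \<le> card (I - J)" for e
  proof -
    have "e < k" using that card_diff \<open>card (I \<inter> J) \<noteq> 0\<close> assms(1) by linarith
    then show ?thesis
      unfolding power_sum_Diff_eq_iff[OF fin] by (rule shifted_base_power_sums_eq[OF assms(1,3-6,11)])
  qed
  moreover have "inj_on ?a ((I - J) \<union> (J - I))"
    using inj_on_shifted_base[OF assms(8)] by (rule inj_on_subset) (use assms(3,5) in auto)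
  ultimately have "I - J = J - I"
    using fin card_diff by (intro power_sums_eq_imp_eq) auto
  then have "I \<subseteq> J" by blast
  then show False using card_subset_eq[OF fin(2)] assms(4,6,7) by auto
qed

end
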